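(* Let $E,F$ be Banach spaces, $a\in E$, $1\le p<\infty$, and let $f:E\rightarrow F$ be almost $p$-summing at $a$. Then for every unconditionally $p$-summable sequence $(x_{j})_{j=1}^{\infty}$ in $E$, the sequence $(f(a+x_{j})-f(a))_{j=1}^{\infty}$ is almost unconditionally summable in $F$.
   Context: $(r_j)_{j\ge1}$ are the Rademacher functions on $[0,1]$. For a sequence $(x_j)$ in $E$, $\Vert(x_{j})_{j}\Vert_{w,p}:=\sup_{\varphi\in B_{E'}}(\sum_{j}|\varphi(x_{j})|^{p})^{1/p}$; $(x_j)_{j=1}^\infty$ is unconditionally $p$-summable if this is finite and $\lim_{m\to\infty}\Vert(x_{j})_{j=m}^{\infty}\Vert_{w,p}=0$. A sequence $(y_j)$ in $F$ is almost unconditionally summable if $\sum_{j=1}^{\infty}r_{j}(t)y_{j}$ converges in $L_{2}([0,1],F)$ (equivalently in $L_s([0,1],F)$ for some/all $0<s<\infty$). A mapping $f:E\to F$ is almost $p$-summing at $a$ if there exist $C_a,\epsilon_a,r_a>0$ such that $(\int_{0}^{1}\Vert\sum_{j=1}^{k}(f(a+x_{j})-f(a))r_{j}(t)\Vert^{2}dt)^{1/2}\leq C_{a}\Vert(x_{j})_{j=1}^{k}\Vert_{w,p}^{r_{a}}$ for every $k$ and all $x_1,\dots,x_k\in E$ with $\Vert(x_{j})_{j=1}^{k}\Vert_{w,p}<\epsilon_{a}$. *)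

theory Defs
  imports "HOL-Analysis.Analysis"
begin

definition rademacher :: "nat \<Rightarrow> real \<Rightarrow> real" where
  "rademacher j t = sgn (sin (2 ^ j * pi * t))"

definition dual_ball :: "('a::real_normed_vector \<Rightarrow> real) set" where
  "dual_ball = {\<phi>. bounded_linear \<phi> \<and> onorm \<phi> \<le> 1}"

text \<open>Weak p-norm of a finite family x_1,...,x_k (here x 0, ..., x (k-1)).\<close>
definition wnorm_fin :: "real \<Rightarrow> (nat \<Rightarrow> 'a::real_normed_vector) \<Rightarrow> nat \<Rightarrow> real" where
  "wnorm_fin p x k = (SUP \<phi>\<in>dual_ball. (\<Sum>j<k. \<bar>\<phi> (x j)\<bar> powr p)) powr (1 / p)"

definition wpow :: "real \<Rightarrow> (nat \<Rightarrow> 'a::real_normed_vector) \<Rightarrow> nat set \<Rightarrow> ennreal" where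
  "wpow p x J = (SUP \<phi>\<in>dual_ball. (\<Sum>j. ennreal (if j \<in> J then \<bar>\<phi> (x j)\<bar> powr p else 0)))"

definition unconditionally_p_summable :: "real \<Rightarrow> (nat \<Rightarrow> 'a::real_normed_vector) \<Rightarrow> bool" where
  "unconditionally_p_summable p x \<longleftrightarrow>
     wpow p x UNIV < \<infinity> \<and> (\<lambda>m. wpow p x {m..}) \<longlonglongrightarrow> 0"

text \<open>Partial Rademacher sums sum_{j=1}^n r_j(t) y_j (sequence indexed from 0, paired with r_{j+1}).\<close>
definition rad_partial :: "(nat \<Rightarrow> 'b::real_normed_vector) \<Rightarrow> nat \<Rightarrow> real \<Rightarrow> 'b" where
  "rad_partial y n t = (\<Sum>j<n. rademacher (Suc j) t *\<^sub>R y j)"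

text \<open>Convergence of the Rademacher series in L_2([0,1],F).\<close>
definition almost_unconditionally_summable :: "(nat \<Rightarrow> 'b::real_normed_vector) \<Rightarrow> bool" where
  "almost_unconditionally_summable y \<longleftrightarrow>
     (\<exists>g. g \<in> borel_measurable (lebesgue_on {0..1}) \<and>
          (\<lambda>n. \<integral>\<^sup>+ t. ennreal ((norm (rad_partial y n t - g t))\<^sup>2) \<partial>(lebesgue_on {0..1}))
            \<longlonglongrightarrow> 0)"

definition almost_p_summing_at ::
  "real \<Rightarrow> ('a::real_normed_vector \<Rightarrow> 'b::real_normed_vector) \<Rightarrow> 'a \<Rightarrow> bool" where
  "almost_p_summing_at p f a \<longleftrightarrow>
     (\<exists>C \<epsilon> r. C > 0 \<and> \<epsilon> > 0 \<and> r > 0 \<and>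
        (\<forall>k x. wnorm_fin p x k < \<epsilon> \<longrightarrow>
           sqrt (integral\<^sup>L (lebesgue_on {0..1})
              (\<lambda>t. (norm (\<Sum>j<k. rademacher (Suc j) t *\<^sub>R (f (a + x j) - f a)))\<^sup>2))
           \<le> C * wnorm_fin p x k powr r))"

end

theory Submission
  imports Defs
begin

(* Let S_n = sum_{j<n} r_{j+1} (f (a + x_j) - f a) be the Rademacher partial sums. For m <= n,
   S_n - S_m is the Rademacher sum of f (a + x'_j) - f a, where x' agrees with x from index m on
   and vanishes before it (those terms contribute f a - f a = 0). The weak p-norm of x' is bounded
   by that of the tail (x_j)_{j >= m}, which tends to 0 by unconditional p-summability, so the
   almost p-summing estimate makes (S_n) a Cauchy sequence in L_2([0,1], F). Its limit exists by
   the Riesz-Fischer argument: a rapidly Cauchy subsequence converges almost everywhere, and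
   Fatou's lemma turns the Cauchy bounds into L_2 convergence to the pointwise limit. *)

lemma convergent_if_summable_norm_diff:
  fixes s :: "nat \<Rightarrow> 'a::banach"
  assumes "summable (\<lambda>k. norm (s (Suc k) - s k))"
  shows "convergent s"
proof -
  have "summable (\<lambda>k. s (Suc k) - s k)"
    using assms by (rule summable_norm_cancel)
  then have "convergent (\<lambda>k. s 0 + (\<Sum>i<k. s (Suc i) - s i))"
    by (intro convergent_add convergent_const) (simp add: summable_iff_convergent)
  then show ?thesis
    by (simp add: sum_lessThan_telescope)
qed

lemma summable_if_weighted_squares_finite:
  fixes d :: "nat \<Rightarrow> real"
  assumes "(\<Sum>k. ennreal (2^k * (d k)\<^sup>2)) \<noteq> \<infinity>"
  shows "summable (\<lambda>k. \<bar>d k\<bar>)"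
proof -
  define c where "c = enn2real (\<Sum>k. ennreal (2^k * (d k)\<^sup>2))"
  have "2^k * (d k)\<^sup>2 \<le> c" for k
  proof -
    have "ennreal (2^k * (d k)\<^sup>2) = (\<Sum>i\<in>{k}. ennreal (2^i * (d i)\<^sup>2))"
      by simp
    also have "\<dots> \<le> (\<Sum>i. ennreal (2^i * (d i)\<^sup>2))"
      by (intro sum_le_suminf summableI) auto
    finally have "ennreal (2^k * (d k)\<^sup>2) \<le> (\<Sum>i. ennreal (2^i * (d i)\<^sup>2))" .
    then have "enn2real (ennreal (2^k * (d k)\<^sup>2)) \<le> c"
      unfolding c_def using assms by (intro enn2real_mono) (auto simp: less_top)
    then show ?thesis
      by simp
  qed
  then have "(d k)\<^sup>2 \<le> c * (1/2)^k" for k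
    by (simp add: field_simps)
  then have bound: "\<bar>d k\<bar> \<le> sqrt c * sqrt (1/2) ^ k" for k
    by (metis real_sqrt_abs real_sqrt_le_mono real_sqrt_mult real_sqrt_power)
  have "summable (\<lambda>k. sqrt c * sqrt (1/2) ^ k)"
    by (intro summable_mult summable_geometric) auto
  then show ?thesis
    by (rule summable_comparison_test') (simp add: bound)
qed

lemma AE_convergent_if_L2_increments_geometric:
  fixes S :: "nat \<Rightarrow> 'a \<Rightarrow> 'b::banach"
  assumes meas: "\<And>k. (\<lambda>t. norm (S (Suc k) t - S k t)) \<in> borel_measurable M"
    and bound: "\<And>k. (\<integral>\<^sup>+t. ennreal ((norm (S (Suc k) t - S k t))\<^sup>2) \<partial>M) \<le> ennreal ((1/4)^k)"
  shows "AE t in M. convergent (\<lambda>k. S k t)"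
proof -
  define D where "D k t = norm (S (Suc k) t - S k t)" for k t
  have [measurable]: "D k \<in> borel_measurable M" for k
    unfolding D_def by (rule meas)
  \<comment> \<open>\<Phi> has integral at most \<open>\<Sum>k. 2^k / 4^k\<close>, so it is finite a.e., which forces \<open>D k t = O(2^(-k/2))\<close>.\<close>
  define \<Phi> where "\<Phi> t = (\<Sum>k. ennreal (2^k * (D k t)\<^sup>2))" for t
  have "(\<integral>\<^sup>+t. \<Phi> t \<partial>M) = (\<Sum>k. \<integral>\<^sup>+t. ennreal (2^k * (D k t)\<^sup>2) \<partial>M)"
    unfolding \<Phi>_def by (rule nn_integral_suminf) measurable
  also have "\<dots> \<le> (\<Sum>k. ennreal ((1/2)^k))"
  proof (intro suminf_le allI)
    fix k
    have "(\<integral>\<^sup>+t. ennreal (2^k * (D k t)\<^sup>2) \<partial>M)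
        = ennreal (2^k) * (\<integral>\<^sup>+t. ennreal ((D k t)\<^sup>2) \<partial>M)"
      by (subst nn_integral_cmult[symmetric]) (auto simp: ennreal_mult)
    also have "\<dots> \<le> ennreal (2^k) * ennreal ((1/4)^k)"
      using bound[of k, folded D_def] by (intro mult_left_mono) auto
    also have "\<dots> = ennreal ((1/2)^k)"
      by (simp add: ennreal_mult[symmetric] power_mult_distrib[symmetric])
    finally show "(\<integral>\<^sup>+t. ennreal (2^k * (D k t)\<^sup>2) \<partial>M) \<le> ennreal ((1/2)^k)" .
  qed auto
  also have "\<dots> = ennreal (\<Sum>k. (1/2)^k)"
    by (intro suminf_ennreal2) auto
  finally have "(\<integral>\<^sup>+t. \<Phi> t \<partial>M) \<noteq> \<infinity>"
    by (auto simp: top_unique)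
  then have "AE t in M. \<Phi> t \<noteq> \<infinity>"
    unfolding \<Phi>_def by (intro nn_integral_PInf_AE) measurable
  then show ?thesis
  proof (rule AE_mp, intro AE_I2 impI)
    fix t assume "\<Phi> t \<noteq> \<infinity>"
    then have "summable (\<lambda>k. \<bar>D k t\<bar>)"
      unfolding \<Phi>_def by (rule summable_if_weighted_squares_finite)
    then show "convergent (\<lambda>k. S k t)"
      by (intro convergent_if_summable_norm_diff) (simp add: D_def)
  qed
qed

lemma borel_measurable_AE_limit:
  fixes S :: "nat \<Rightarrow> 'a \<Rightarrow> 'b::banach"
  assumes meas: "\<And>k. S k \<in> borel_measurable M"
    and conv: "AE t in M. convergent (\<lambda>k. S k t)"
  obtains g where "g \<in> borel_measurable M" and "AE t in M. (\<lambda>k. S k t) \<longlonglongrightarrow> g t"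
proof -
  from conv obtain N where N: "\<And>t. t \<in> space M - N \<Longrightarrow> convergent (\<lambda>k. S k t)"
    and null: "N \<in> null_sets M"
    by (elim AE_E3) blast
  have [measurable]: "N \<in> sets M"
    using null by (rule null_setsD2)
  \<comment> \<open>On \<open>N\<close> the value of \<open>lim\<close> is unspecified; zeroing \<open>S\<close> there makes the limit exist everywhere.\<close>
  define F where "F k t = (if t \<in> N then 0 else S k t)" for k t
  define g where "g t = lim (\<lambda>k. F k t)" for t
  have F_meas: "F k \<in> borel_measurable M" for k
    unfolding F_def using meas by measurable
  have F_lim: "(\<lambda>k. F k t) \<longlonglongrightarrow> g t" if "t \<in> space M" for t
    using N that unfolding g_def F_def by (cases "t \<in> N") (auto simp: convergent_LIMSEQ_iff)
  have "g \<in> borel_measurable M"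
    using F_meas F_lim by (rule borel_measurable_LIMSEQ_metric)
  moreover have "AE t in M. (\<lambda>k. S k t) \<longlonglongrightarrow> g t"
    using AE_not_in[OF null]
  proof (rule AE_mp, intro AE_I2 impI)
    fix t assume "t \<in> space M" and "t \<notin> N"
    then show "(\<lambda>k. S k t) \<longlonglongrightarrow> g t"
      using F_lim[of t] by (simp add: F_def)
  qed
  ultimately show ?thesis
    by (rule that)
qed

lemma nn_integral_square_norm_limit_le:
  fixes S :: "nat \<Rightarrow> 'a \<Rightarrow> 'b::real_normed_vector"
  assumes meas: "\<And>k. (\<lambda>t. norm (S k t - h t)) \<in> borel_measurable M"
    and lim: "AE t in M. (\<lambda>k. S k t) \<longlonglongrightarrow> g t"
    and bound: "eventually (\<lambda>k. (\<integral>\<^sup>+t. ennreal ((norm (S k t - h t))\<^sup>2) \<partial>M) \<le> e) sequentially"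
  shows "(\<integral>\<^sup>+t. ennreal ((norm (g t - h t))\<^sup>2) \<partial>M) \<le> e"
proof -
  have "(\<integral>\<^sup>+t. ennreal ((norm (g t - h t))\<^sup>2) \<partial>M)
      = (\<integral>\<^sup>+t. liminf (\<lambda>k. ennreal ((norm (S k t - h t))\<^sup>2)) \<partial>M)"
  proof (rule nn_integral_cong_AE)
    show "AE t in M. ennreal ((norm (g t - h t))\<^sup>2) = liminf (\<lambda>k. ennreal ((norm (S k t - h t))\<^sup>2))"
      using lim
    proof (rule AE_mp, intro AE_I2 impI)
      fix t assume "(\<lambda>k. S k t) \<longlonglongrightarrow> g t"
      then have "(\<lambda>k. ennreal ((norm (S k t - h t))\<^sup>2)) \<longlonglongrightarrow> ennreal ((norm (g t - h t))\<^sup>2)"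
        by (intro tendsto_intros)
      then show "ennreal ((norm (g t - h t))\<^sup>2) = liminf (\<lambda>k. ennreal ((norm (S k t - h t))\<^sup>2))"
        by (metis lim_imp_Liminf trivial_limit_sequentially)
    qed
  qed
  also have "\<dots> \<le> liminf (\<lambda>k. \<integral>\<^sup>+t. ennreal ((norm (S k t - h t))\<^sup>2) \<partial>M)"
    by (rule nn_integral_liminf) (use meas in measurable)
  also have "\<dots> \<le> limsup (\<lambda>k. \<integral>\<^sup>+t. ennreal ((norm (S k t - h t))\<^sup>2) \<partial>M)"
    by (rule Liminf_le_Limsup) simp
  also have "\<dots> \<le> e"
    using bound by (rule Limsup_bounded)
  finally show ?thesis .
qed

(* Measurability of the norms of differences is assumed separately: in a non-separable Banach
   space the difference of two Borel measurable functions need not be Borel measurable. *)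
lemma L2_Cauchy_imp_convergent:
  fixes S :: "nat \<Rightarrow> 'a \<Rightarrow> 'b::banach"
  assumes meas: "\<And>n. S n \<in> borel_measurable M"
    and meas_diff: "\<And>m n. (\<lambda>t. norm (S n t - S m t)) \<in> borel_measurable M"
    and Cauchy: "\<And>e. 0 < e \<Longrightarrow> \<exists>N. \<forall>m\<ge>N. \<forall>n\<ge>m.
        (\<integral>\<^sup>+t. ennreal ((norm (S n t - S m t))\<^sup>2) \<partial>M) \<le> ennreal e"
  obtains g where "g \<in> borel_measurable M"
    and "(\<lambda>n. \<integral>\<^sup>+t. ennreal ((norm (S n t - g t))\<^sup>2) \<partial>M) \<longlonglongrightarrow> 0"
proof -
  have "\<exists>N. \<forall>m\<ge>N. \<forall>n\<ge>m. (\<integral>\<^sup>+t. ennreal ((norm (S n t - S m t))\<^sup>2) \<partial>M) \<le> ennreal ((1/4)^k)"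
    for k :: nat
    by (rule Cauchy) simp
  then obtain N where N: "\<And>k m n. N k \<le> m \<Longrightarrow> m \<le> n \<Longrightarrow>
      (\<integral>\<^sup>+t. ennreal ((norm (S n t - S m t))\<^sup>2) \<partial>M) \<le> ennreal ((1/4)^k)"
    by metis
  define \<sigma> where "\<sigma> k = k + (\<Sum>i\<le>k. N i)" for k
  have \<sigma>_ge_N: "N k \<le> \<sigma> k" and \<sigma>_ge: "k \<le> \<sigma> k" and \<sigma>_mono: "\<sigma> k \<le> \<sigma> (Suc k)" for k
    unfolding \<sigma>_def using member_le_sum[of k "{..k}" N] by auto
  have "AE t in M. convergent (\<lambda>k. S (\<sigma> k) t)"
    using meas_diff N[OF \<sigma>_ge_N \<sigma>_mono] by (rule AE_convergent_if_L2_increments_geometric)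
  with meas obtain g where g_meas: "g \<in> borel_measurable M"
    and g_lim: "AE t in M. (\<lambda>k. S (\<sigma> k) t) \<longlonglongrightarrow> g t"
    by (rule borel_measurable_AE_limit)
  have Limsup_le: "Limsup sequentially (\<lambda>n. \<integral>\<^sup>+t. ennreal ((norm (S n t - g t))\<^sup>2) \<partial>M) \<le> ennreal e"
    if "0 < e" for e
  proof -
    from Cauchy[OF that] obtain Ne where Ne: "\<And>m n. Ne \<le> m \<Longrightarrow> m \<le> n \<Longrightarrow>
        (\<integral>\<^sup>+t. ennreal ((norm (S n t - S m t))\<^sup>2) \<partial>M) \<le> ennreal e"
      by blast
    have "(\<integral>\<^sup>+t. ennreal ((norm (g t - S m t))\<^sup>2) \<partial>M) \<le> ennreal e" if "Ne \<le> m" for m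
    proof (rule nn_integral_square_norm_limit_le[OF meas_diff g_lim])
      show "eventually (\<lambda>k. (\<integral>\<^sup>+t. ennreal ((norm (S (\<sigma> k) t - S m t))\<^sup>2) \<partial>M) \<le> ennreal e) sequentially"
        unfolding eventually_sequentially using Ne[OF that] \<sigma>_ge le_trans by blast
    qed
    then have "eventually (\<lambda>m. (\<integral>\<^sup>+t. ennreal ((norm (S m t - g t))\<^sup>2) \<partial>M) \<le> ennreal e) sequentially"
      unfolding eventually_sequentially by (auto simp: norm_minus_commute)
    then show ?thesis
      by (simp add: Limsup_bounded)
  qed
  have "Limsup sequentially (\<lambda>n. \<integral>\<^sup>+t. ennreal ((norm (S n t - g t))\<^sup>2) \<partial>M) \<le> 0"
    by (rule ennreal_le_epsilon) (simp add: Limsup_le)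
  with g_meas show ?thesis
    by (intro that tendsto_0_if_Limsup_eq_0_ennreal antisym) auto
qed

lemma simple_function_rademacher: "simple_function (lebesgue_on {0..1}) (rademacher j)"
proof (rule simple_function_borel_measurable)
  have "rademacher j \<in> borel_measurable borel"
    unfolding rademacher_def by measurable
  from measurable_compose[OF id_borel_measurable_lebesgue_on this]
  show "rademacher j \<in> borel_measurable (lebesgue_on {0..1})"
    by (simp add: id_def)
  have "rademacher j ` space (lebesgue_on {0..1}) \<subseteq> {-1, 0, 1}"
    by (auto simp: rademacher_def sgn_real_def)
  then show "finite (rademacher j ` space (lebesgue_on {0..1}))"
    by (rule finite_subset) auto
qed

lemma simple_function_rad_partial: "simple_function (lebesgue_on {0..1}) (rad_partial y n)"
proof (induction n)
  case 0
  then show ?case by (simp add: rad_partial_def)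
next
  case (Suc n)
  have "simple_function (lebesgue_on {0..1}) (\<lambda>t. rademacher (Suc n) t *\<^sub>R y n)"
    using simple_function_compose1[OF simple_function_rademacher, of "\<lambda>r. r *\<^sub>R y n"] by simp
  with Suc have "simple_function (lebesgue_on {0..1}) (\<lambda>t. rad_partial y n t + rademacher (Suc n) t *\<^sub>R y n)"
    by (rule simple_function_compose2)
  then show ?case
    by (simp add: rad_partial_def)
qed

lemma borel_measurable_norm_rad_partial_diff:
  "(\<lambda>t. norm (rad_partial y n t - rad_partial y m t)) \<in> borel_measurable (lebesgue_on {0..1})"
proof -
  have "simple_function (lebesgue_on {0..1}) (\<lambda>t. norm (rad_partial y n t - rad_partial y m t))"
    by (rule simple_function_compose2[OF simple_function_rad_partial simple_function_rad_partial])
  then show ?thesis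
    by (rule borel_measurable_simple_function)
qed

lemma norm_rad_partial_le: "norm (rad_partial y n t) \<le> (\<Sum>j<n. norm (y j))"
proof -
  have "norm (rad_partial y n t) \<le> (\<Sum>j<n. norm (rademacher (Suc j) t *\<^sub>R y j))"
    unfolding rad_partial_def by (rule norm_sum)
  also have "\<dots> \<le> (\<Sum>j<n. norm (y j))"
  proof (rule sum_mono)
    fix j
    have "\<bar>rademacher (Suc j) t\<bar> \<le> 1"
      by (simp add: rademacher_def sgn_real_def)
    then show "norm (rademacher (Suc j) t *\<^sub>R y j) \<le> norm (y j)"
      by (simp add: mult_left_le_one_le)
  qed
  finally show ?thesis .
qed

lemma rad_partial_diff:
  assumes "m \<le> n"
  shows "rad_partial y n t - rad_partial y m t = rad_partial (\<lambda>j. if m \<le> j then y j else 0) n t"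
  using assms unfolding rad_partial_def by (induction n rule: dec_induct) simp_all

lemma nn_integral_square_norm_rad_partial:
  "(\<integral>\<^sup>+t. ennreal ((norm (rad_partial y n t))\<^sup>2) \<partial>lebesgue_on {0..1})
    = ennreal (\<integral>t. (norm (rad_partial y n t))\<^sup>2 \<partial>lebesgue_on {0..1})"
proof (rule nn_integral_eq_integral)
  have "finite_measure (lebesgue_on {0..1::real})"
    by (rule finite_measure_lebesgue_on) simp
  then show "integrable (lebesgue_on {0..1}) (\<lambda>t. (norm (rad_partial y n t))\<^sup>2)"
  proof (rule finite_measure.integrable_const_bound)
    show "AE t in lebesgue_on {0..1}. norm ((norm (rad_partial y n t))\<^sup>2) \<le> (\<Sum>j<n. norm (y j))\<^sup>2"
      by (intro AE_I2) (simp add: power_mono norm_rad_partial_le)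
    show "(\<lambda>t. (norm (rad_partial y n t))\<^sup>2) \<in> borel_measurable (lebesgue_on {0..1})"
      using borel_measurable_norm_rad_partial_diff[of y n 0] by (simp add: rad_partial_def)
  qed
qed auto

lemma wnorm_fin_tail_le:
  assumes "0 \<le> p" and finite: "wpow p x {m..} < \<infinity>"
  shows "wnorm_fin p (\<lambda>j. if m \<le> j then x j else 0) n \<le> enn2real (wpow p x {m..}) powr (1/p)"
proof -
  define x' where "x' j = (if m \<le> j then x j else 0)" for j
  have sum_le: "(\<Sum>j<n. \<bar>\<phi> (x' j)\<bar> powr p) \<le> enn2real (wpow p x {m..})" if \<phi>: "\<phi> \<in> dual_ball" for \<phi>
  proof -
    have "\<phi> 0 = 0"
      using \<phi> unfolding dual_ball_def by (auto simp: linear_simps)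
    then have "(\<Sum>j<n. \<bar>\<phi> (x' j)\<bar> powr p) = (\<Sum>j<n. if j \<in> {m..} then \<bar>\<phi> (x j)\<bar> powr p else 0)"
      by (intro sum.cong) (auto simp: x'_def)
    then have "ennreal (\<Sum>j<n. \<bar>\<phi> (x' j)\<bar> powr p)
        = (\<Sum>j<n. ennreal (if j \<in> {m..} then \<bar>\<phi> (x j)\<bar> powr p else 0))"
      by (simp add: sum_ennreal)
    also have "\<dots> \<le> (\<Sum>j. ennreal (if j \<in> {m..} then \<bar>\<phi> (x j)\<bar> powr p else 0))"
      by (intro sum_le_suminf summableI) auto
    also have "\<dots> \<le> wpow p x {m..}"
      unfolding wpow_def using \<phi> by (rule SUP_upper)
    finally have "enn2real (ennreal (\<Sum>j<n. \<bar>\<phi> (x' j)\<bar> powr p)) \<le> enn2real (wpow p x {m..})"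
      using finite by (intro enn2real_mono) auto
    then show ?thesis
      by (simp add: sum_nonneg)
  qed
  have zero_in_ball: "(\<lambda>_. 0) \<in> (dual_ball :: ('a \<Rightarrow> real) set)"
    by (simp add: dual_ball_def onorm_zero)
  have bdd: "bdd_above ((\<lambda>\<phi>. \<Sum>j<n. \<bar>\<phi> (x' j)\<bar> powr p) ` dual_ball)"
    using sum_le by (intro bdd_aboveI2) auto
  have "0 \<le> (SUP \<phi>\<in>dual_ball. \<Sum>j<n. \<bar>\<phi> (x' j)\<bar> powr p)"
    using cSUP_upper[OF zero_in_ball bdd] by simp
  moreover have "(SUP \<phi>\<in>dual_ball. \<Sum>j<n. \<bar>\<phi> (x' j)\<bar> powr p) \<le> enn2real (wpow p x {m..})"
    using zero_in_ball sum_le by (intro cSUP_least) auto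
  ultimately show ?thesis
    unfolding wnorm_fin_def x'_def[symmetric] using \<open>0 \<le> p\<close> by (intro powr_mono2) auto
qed

lemma unconditionally_p_summable_tails_small:
  assumes "0 < p" and "unconditionally_p_summable p x" and "0 < \<delta>"
  shows "\<exists>M. \<forall>m\<ge>M. \<forall>n. wnorm_fin p (\<lambda>j. if m \<le> j then x j else 0) n < \<delta>"
proof -
  have tails: "(\<lambda>m. wpow p x {m..}) \<longlonglongrightarrow> 0"
    using assms(2) unfolding unconditionally_p_summable_def by blast
  then have "(\<lambda>m. enn2real (wpow p x {m..})) \<longlonglongrightarrow> 0"
    using tendsto_enn2real[of _ 0] by fastforce
  then have "(\<lambda>m. enn2real (wpow p x {m..}) powr (1/p)) \<longlonglongrightarrow> 0"
    by (rule tendsto_zero_powrI[OF _ tendsto_const]) (use \<open>0 < p\<close> in auto)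
  then have "eventually (\<lambda>m. enn2real (wpow p x {m..}) powr (1/p) < \<delta>) sequentially"
    using \<open>0 < \<delta>\<close> by (rule order_tendstoD)
  moreover have "eventually (\<lambda>m. wpow p x {m..} < \<infinity>) sequentially"
    using tails by (rule order_tendstoD) simp
  ultimately have "eventually (\<lambda>m. \<forall>n. wnorm_fin p (\<lambda>j. if m \<le> j then x j else 0) n < \<delta>) sequentially"
  proof eventually_elim
    case (elim m)
    then show ?case
      using wnorm_fin_tail_le[of p x m] \<open>0 < p\<close> by (meson le_less_trans less_imp_le)
  qed
  then show ?thesis
    unfolding eventually_sequentially by blast
qed

lemma almost_p_summing_at_L2_small:
  fixes f :: "'a::real_normed_vector \<Rightarrow> 'b::real_normed_vector"
  assumes "almost_p_summing_at p f a" and "0 < e"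
  obtains \<delta> where "0 < \<delta>" and "\<And>k x. wnorm_fin p x k < \<delta> \<Longrightarrow>
    (\<integral>\<^sup>+t. ennreal ((norm (rad_partial (\<lambda>j. f (a + x j) - f a) k t))\<^sup>2) \<partial>lebesgue_on {0..1})
      \<le> ennreal e"
proof -
  obtain C \<epsilon> r where "0 < C" "0 < \<epsilon>" "0 < r" and bound: "\<And>k x. wnorm_fin p x k < \<epsilon> \<Longrightarrow>
      sqrt (\<integral>t. (norm (rad_partial (\<lambda>j. f (a + x j) - f a) k t))\<^sup>2 \<partial>lebesgue_on {0..1})
        \<le> C * wnorm_fin p x k powr r"
    using assms(1) unfolding almost_p_summing_at_def rad_partial_def by blast
  define \<delta> where "\<delta> = min \<epsilon> ((sqrt e / C) powr (1/r))"
  show thesis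
  proof (rule that)
    show "0 < \<delta>"
      unfolding \<delta>_def using \<open>0 < \<epsilon>\<close> \<open>0 < C\<close> \<open>0 < e\<close> by simp
    fix k and x :: "nat \<Rightarrow> 'a" assume small: "wnorm_fin p x k < \<delta>"
    have "0 \<le> wnorm_fin p x k"
      by (simp add: wnorm_fin_def)
    have "sqrt (\<integral>t. (norm (rad_partial (\<lambda>j. f (a + x j) - f a) k t))\<^sup>2 \<partial>lebesgue_on {0..1})
        \<le> C * wnorm_fin p x k powr r"
      using small by (intro bound) (simp add: \<delta>_def)
    also have "\<dots> < C * ((sqrt e / C) powr (1/r)) powr r"
      using small \<open>0 \<le> wnorm_fin p x k\<close> \<open>0 < C\<close> \<open>0 < r\<close>
      by (intro mult_strict_left_mono powr_less_mono2) (auto simp: \<delta>_def)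
    also have "\<dots> = sqrt e"
      using \<open>0 < C\<close> \<open>0 < r\<close> \<open>0 < e\<close> by (simp add: powr_powr)
    finally have "(\<integral>t. (norm (rad_partial (\<lambda>j. f (a + x j) - f a) k t))\<^sup>2 \<partial>lebesgue_on {0..1}) \<le> e"
      by simp
    then show "(\<integral>\<^sup>+t. ennreal ((norm (rad_partial (\<lambda>j. f (a + x j) - f a) k t))\<^sup>2) \<partial>lebesgue_on {0..1})
        \<le> ennreal e"
      by (simp add: nn_integral_square_norm_rad_partial ennreal_leI)
  qed
qed

lemma rad_partial_L2_Cauchy:
  assumes "0 < p" and "almost_p_summing_at p f a" and "unconditionally_p_summable p x" and "0 < e"
  shows "\<exists>N. \<forall>m\<ge>N. \<forall>n\<ge>m. (\<integral>\<^sup>+t. ennreal ((norm (rad_partial (\<lambda>j. f (a + x j) - f a) n t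
      - rad_partial (\<lambda>j. f (a + x j) - f a) m t))\<^sup>2) \<partial>lebesgue_on {0..1}) \<le> ennreal e"
proof -
  obtain \<delta> where "0 < \<delta>" and small: "\<And>k x. wnorm_fin p x k < \<delta> \<Longrightarrow>
      (\<integral>\<^sup>+t. ennreal ((norm (rad_partial (\<lambda>j. f (a + x j) - f a) k t))\<^sup>2) \<partial>lebesgue_on {0..1})
        \<le> ennreal e"
    using almost_p_summing_at_L2_small[OF assms(2,4)] by blast
  obtain M where M: "\<And>m n. M \<le> m \<Longrightarrow> wnorm_fin p (\<lambda>j. if m \<le> j then x j else 0) n < \<delta>"
    using unconditionally_p_summable_tails_small[OF assms(1,3) \<open>0 < \<delta>\<close>] by blast
  have diff: "rad_partial (\<lambda>j. f (a + x j) - f a) n t - rad_partial (\<lambda>j. f (a + x j) - f a) m t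
      = rad_partial (\<lambda>j. f (a + (if m \<le> j then x j else 0)) - f a) n t" if "m \<le> n" for m n t
  proof -
    have "(\<lambda>j. if m \<le> j then f (a + x j) - f a else 0) = (\<lambda>j. f (a + (if m \<le> j then x j else 0)) - f a)"
      by auto
    then show ?thesis
      unfolding rad_partial_diff[OF that] by (simp only:)
  qed
  show ?thesis
  proof (intro exI[of _ M] allI impI)
    fix m n assume "M \<le> m" and "m \<le> n"
    then show "(\<integral>\<^sup>+t. ennreal ((norm (rad_partial (\<lambda>j. f (a + x j) - f a) n t
        - rad_partial (\<lambda>j. f (a + x j) - f a) m t))\<^sup>2) \<partial>lebesgue_on {0..1}) \<le> ennreal e"
      unfolding diff[OF \<open>m \<le> n\<close>] by (intro small M)
  qed
qed

theorem mainTheorem4: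
  fixes f :: "'a::banach \<Rightarrow> 'b::banach" and a :: 'a and p :: real
  assumes "1 \<le> p"
    and "almost_p_summing_at p f a"
    and "unconditionally_p_summable p x"
  shows "almost_unconditionally_summable (\<lambda>j. f (a + x j) - f a)"
proof -
  let ?S = "rad_partial (\<lambda>j. f (a + x j) - f a)"
  have "0 < p"
    using \<open>1 \<le> p\<close> by simp
  obtain g where "g \<in> borel_measurable (lebesgue_on {0..1})"
    and "(\<lambda>n. \<integral>\<^sup>+t. ennreal ((norm (?S n t - g t))\<^sup>2) \<partial>lebesgue_on {0..1}) \<longlonglongrightarrow> 0"
  proof (rule L2_Cauchy_imp_convergent)
    show "?S n \<in> borel_measurable (lebesgue_on {0..1})" for n
      by (rule borel_measurable_simple_function[OF simple_function_rad_partial])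
    show "(\<lambda>t. norm (?S n t - ?S m t)) \<in> borel_measurable (lebesgue_on {0..1})" for m n
      by (rule borel_measurable_norm_rad_partial_diff)
    show "\<exists>N. \<forall>m\<ge>N. \<forall>n\<ge>m. (\<integral>\<^sup>+t. ennreal ((norm (?S n t - ?S m t))\<^sup>2) \<partial>lebesgue_on {0..1})
        \<le> ennreal e" if "0 < e" for e
      using \<open>0 < p\<close> assms(2,3) that by (rule rad_partial_L2_Cauchy)
  qed
  then show ?thesis
    unfolding almost_unconditionally_summable_def by blast
qed

end
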